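(* Let $n>1$, $a\in\mathcal{T}_n$, and consider the semigroup $(\mathcal{T}_n,*_a)$. Let $x\in\mathcal{T}_n$. If $\operatorname{rank}(a)>1$, $\operatorname{rank}(x)\le\operatorname{rank}(a)$, and every block $B$ of $\rho_x$ satisfies $B\cap\operatorname{ran}(a)\ne\varnothing$, then $$L_x=\{y\in\mathcal{T}_n : \operatorname{ran}(y)=\operatorname{ran}(x) \text{ and } B\cap\operatorname{ran}(a)\neq\varnothing \text{ for every block } B \text{ of } \rho_y\}.$$ Otherwise $L_x=\{x\}$. In particular, if $\operatorname{rank}(a)=1$ then all $\mathcal{L}$-classes of $(\mathcal{T}_n,*_a)$ consist of one element.
   Context: $\mathcal{T}_n$ is the set of all maps $N\to N$, $N=\{1,\dots,n\}$. Maps are composed from left to right: $(xy)(i)=y(x(i))$. For fixed $a\in\mathcal{T}_n$, $x*_a y:=xay$; $(\mathcal{T}_n,*_a)$ is a semigroup. $\operatorname{ran}(x)$ is the image of $x$, $\operatorname{rank}(x)=|\operatorname{ran}(x)|$, and $\rho_x$ is the partition of $N$ into the nonempty fibres of $x$ ($i,j$ in the same block iff $x(i)=x(j)$). Green's relations in a semigroup $S$: with $S^1$ the semigroup $S$ with an identity adjoined, $x\mathcal{L}y$ iff $S^1x=S^1y$, $x\mathcal{R}y$ iff $xS^1=yS^1$, $\mathcal{H}=\mathcal{L}\cap\mathcal{R}$, $\mathcal{D}=\mathcal{L}\circ\mathcal{R}$ (which equals $\mathcal{R}\circ\mathcal{L}$); $L_x,R_x,H_x,D_x$ denote the classes of $x$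 in $(\mathcal{T}_n,*_a)$. *)

theory Defs
  imports Main "HOL-Library.Cardinality"
begin

(* T_n is modelled as the maps 'n => 'n for a finite type 'n with CARD('n) = n.
   Maps compose left to right: (x y)(i) = y (x i), so the sandwich product
   x *_a y = x a y is the HOL function  y o a o x. *)
definition sandwich :: "('n \<Rightarrow> 'n) \<Rightarrow> ('n \<Rightarrow> 'n) \<Rightarrow> ('n \<Rightarrow> 'n) \<Rightarrow> ('n \<Rightarrow> 'n)" where
  "sandwich a x y = y \<circ> a \<circ> x"

(* S^1 x in (T_n, *_a): the principal left ideal with identity adjoined *)
definition left_ideal1 :: "('n \<Rightarrow> 'n) \<Rightarrow> ('n \<Rightarrow> 'n) \<Rightarrow> ('n \<Rightarrow> 'n) set" where
  "left_ideal1 a x = insert x {sandwich a s x | s. True}"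

definition L_rel :: "('n \<Rightarrow> 'n) \<Rightarrow> ('n \<Rightarrow> 'n) \<Rightarrow> ('n \<Rightarrow> 'n) \<Rightarrow> bool" where
  "L_rel a x y \<longleftrightarrow> left_ideal1 a x = left_ideal1 a y"

definition L_class :: "('n \<Rightarrow> 'n) \<Rightarrow> ('n \<Rightarrow> 'n) \<Rightarrow> ('n \<Rightarrow> 'n) set" where
  "L_class a x = {y. L_rel a x y}"

definition rank :: "('n \<Rightarrow> 'n) \<Rightarrow> nat" where
  "rank x = card (range x)"

definition kernel_blocks :: "('n \<Rightarrow> 'n) \<Rightarrow> 'n set set" where
  "kernel_blocks x = {x -` {v} | v. v \<in> range x}"

end

theory Submission
  imports Defs
begin

text \<open>Since \<open>x *\<^sub>a s\<close> is the HOL function \<open>(x \<circ> a) \<circ> s\<close>, the left ideal generated by \<open>x\<close>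
  consists of \<open>x\<close> and all maps whose range lies in \<open>x ` range a\<close>. As \<open>x ` range a \<subseteq> range x\<close>,
  two distinct maps \<open>x\<close>, \<open>y\<close> are \<open>\<L>\<close>-related only if the chain
  \<open>range y \<subseteq> x ` range a \<subseteq> range x \<subseteq> y ` range a \<subseteq> range y\<close> collapses: both have the same
  range and both satisfy \<open>x ` range a = range x\<close>, which says that every kernel block of \<open>x\<close>
  meets \<open>range a\<close>. Such an \<open>x\<close> has \<open>rank x \<le> rank a\<close>; if moreover \<open>rank a = 1\<close>, then \<open>x\<close> is
  constant and hence the only map with its range.\<close>

lemma kernel_blocks_meet_iff: "(\<forall>B\<in>kernel_blocks x. B \<inter> A \<noteq> {}) \<longleftrightarrow> x ` A = range x"
proof -
  have "(\<forall>B\<in>kernel_blocks x. B \<inter> A \<noteq> {}) \<longleftrightarrow> (\<forall>v\<in>range x. x -` {v} \<inter> A \<noteq> {})"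
    unfolding kernel_blocks_def by blast
  also have "\<dots> \<longleftrightarrow> range x \<subseteq> x ` A"
    unfolding subset_eq by (intro ball_cong) blast+
  also have "\<dots> \<longleftrightarrow> x ` A = range x"
    by auto
  finally show ?thesis .
qed

lemma ex_comp_eq_iff_range_subset: "(\<exists>s. g = f \<circ> s) \<longleftrightarrow> range g \<subseteq> range f"
proof
  assume "range g \<subseteq> range f"
  then have "g = f \<circ> (inv f \<circ> g)"
    by (intro ext) (metis comp_apply f_inv_into_f rangeI subsetD)
  then show "\<exists>s. g = f \<circ> s" by blast
qed auto

lemma ranges_eq_if_mutually_factor:
  assumes y: "range y \<subseteq> x ` A" and x: "range x \<subseteq> y ` A"
  shows "range y = range x" "x ` A = range x" "y ` A = range y"
proof -
  have x_A: "x ` A \<subseteq> range x" and y_A: "y ` A \<subseteq> range y" by auto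
  have "range y \<subseteq> range x" using y x_A by (rule order_trans)
  moreover have "range x \<subseteq> range y" using x y_A by (rule order_trans)
  ultimately show "range y = range x" "x ` A = range x" "y ` A = range y"
    using x y x_A y_A by auto
qed

lemma left_ideal1_eq: "left_ideal1 a x = insert x {y. range y \<subseteq> x ` range a}"
proof -
  have "y \<in> {sandwich a s x | s. True} \<longleftrightarrow> (\<exists>s. y = (x \<circ> a) \<circ> s)" for y
    by (auto simp: sandwich_def)
  also have "(\<exists>s. y = (x \<circ> a) \<circ> s) \<longleftrightarrow> range y \<subseteq> x ` range a" for y
    by (simp only: ex_comp_eq_iff_range_subset image_comp)
  finally show ?thesis
    unfolding left_ideal1_def by blast
qed

lemma L_class_iff:
  "y \<in> L_class a x \<longleftrightarrow> y = x \<or> range y \<subseteq> x ` range a \<and> range x \<subseteq> y ` range a"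
proof
  assume "y \<in> L_class a x"
  then have ideals: "left_ideal1 a x = left_ideal1 a y"
    unfolding L_class_def L_rel_def by simp
  have "y \<in> left_ideal1 a x" "x \<in> left_ideal1 a y"
    using ideals by (metis insertI1 left_ideal1_def)+
  then show "y = x \<or> range y \<subseteq> x ` range a \<and> range x \<subseteq> y ` range a"
    unfolding left_ideal1_eq by blast
next
  assume "y = x \<or> range y \<subseteq> x ` range a \<and> range x \<subseteq> y ` range a"
  then have "left_ideal1 a x = left_ideal1 a y"
  proof
    assume y: "range y \<subseteq> x ` range a \<and> range x \<subseteq> y ` range a"
    then have "x ` range a = y ` range a"
      using ranges_eq_if_mutually_factor by metis
    with y show ?thesis unfolding left_ideal1_eq by auto
  qed simp
  then show "y \<in> L_class a x"
    unfolding L_class_def L_rel_def by simp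
qed

lemma L_class_eq:
  "L_class a x = (if x ` range a = range x
     then {y. range y = range x \<and> y ` range a = range y} else {x})"
proof -
  have mutual: "range y = range x \<and> x ` range a = range x \<and> y ` range a = range y"
    if "y \<in> L_class a x" "y \<noteq> x" for y
    using that ranges_eq_if_mutually_factor[of y x "range a"] by (simp add: L_class_iff)
  show ?thesis
  proof (cases "x ` range a = range x")
    case True
    have "y \<in> L_class a x \<longleftrightarrow> range y = range x \<and> y ` range a = range y" for y
    proof
      assume "y \<in> L_class a x"
      then show "range y = range x \<and> y ` range a = range y"
        using True mutual[of y] by (cases "y = x") simp_all
    next
      assume "range y = range x \<and> y ` range a = range y"
      then show "y \<in> L_class a x"
        using True by (simp add: L_class_iff)
    qed
    with True show ?thesis by (subst if_P) blast+
  next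
    case False
    have "x \<in> L_class a x" by (simp add: L_class_iff)
    with False mutual show ?thesis by auto
  qed
qed

lemma L_class_singleton_if_rank_one:
  fixes a z :: "'n::finite \<Rightarrow> 'n"
  assumes "rank a = 1"
  shows "L_class a z = {z}"
proof (cases "z ` range a = range z")
  case True
  obtain c where "range a = {c}"
    using assms unfolding rank_def by (metis card_1_singletonE)
  with True have range_z: "range z = {z c}" by simp
  have "y = z" if "range y = range z" for y
  proof
    fix i
    show "y i = z i" using that range_z by (metis rangeI singletonD)
  qed
  then show ?thesis using True by (auto simp: L_class_eq)
qed (simp add: L_class_eq)

theorem theorem6:
  fixes a x :: "'n::finite \<Rightarrow> 'n"
  assumes "CARD('n) > 1"
  shows "(rank a > 1 \<and> rank x \<le> rank a \<and> (\<forall>B\<in>kernel_blocks x. B \<inter> range a \<noteq> {})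
            \<longrightarrow> L_class a x = {y. range y = range x \<and> (\<forall>B\<in>kernel_blocks y. B \<inter> range a \<noteq> {})})
       \<and> (\<not> (rank a > 1 \<and> rank x \<le> rank a \<and> (\<forall>B\<in>kernel_blocks x. B \<inter> range a \<noteq> {}))
            \<longrightarrow> L_class a x = {x})
       \<and> (rank a = 1 \<longrightarrow> (\<forall>z :: 'n \<Rightarrow> 'n. L_class a z = {z}))"
proof (intro conjI impI allI)
  assume "rank a > 1 \<and> rank x \<le> rank a \<and> (\<forall>B\<in>kernel_blocks x. B \<inter> range a \<noteq> {})"
  then show "L_class a x = {y. range y = range x \<and> (\<forall>B\<in>kernel_blocks y. B \<inter> range a \<noteq> {})}"
    by (simp add: L_class_eq kernel_blocks_meet_iff)
next
  assume not_main: "\<not> (rank a > 1 \<and> rank x \<le> rank a \<and> (\<forall>B\<in>kernel_blocks x. B \<inter> range a \<noteq> {}))"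
  show "L_class a x = {x}"
  proof (cases "x ` range a = range x")
    case True
    then have "rank x \<le> rank a"
      using card_image_le[of "range a" x] by (simp add: rank_def)
    moreover have "rank a \<noteq> 0"
      unfolding rank_def by simp
    ultimately have "rank a = 1"
      using not_main True kernel_blocks_meet_iff[of x "range a"] by linarith
    then show ?thesis by (rule L_class_singleton_if_rank_one)
  qed (simp add: L_class_eq)
next
  fix z :: "'n \<Rightarrow> 'n"
  assume "rank a = 1"
  then show "L_class a z = {z}" by (rule L_class_singleton_if_rank_one)
qed

end
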